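(* Let $m\ge 3$ and let $G=\mathrm{Sp}_{2m}(2)$ act in one of its two $2$-transitive actions (on the set of quadratic forms of $+$ type, respectively of $-$ type, on $\mathbb{F}_2^{2m}$ whose associated bilinear form is the defining symplectic form; degrees $2^{2m-1}+2^{m-1}$ and $2^{2m-1}-2^{m-1}$). Then for any two distinct points $\omega,\omega'$, the setwise stabilizer of $\{\omega,\omega'\}$ splits as a direct product $G(\{\omega,\omega'\}) = G(\omega,\omega')\times\langle s\rangle$, where $s$ is an involution swapping $\omega$ and $\omega'$. Consequently, there is no proper extension of this action to a $2$-by-block-transitive action of $G$.
   Context: A proper extension to a $2$-by-block-transitive action is a $G$-set $\Omega$ with a $G$-equivariant surjection onto the given $G$-set whose fibres (blocks) have size at least $2$, such that $G$ is transitive on ordered pairs of points of $\Omega$ in distinct blocks. *)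

theory Defs
  imports Main
begin

text \<open>Vectors of F_2^(2m) are encoded as subsets of {..<2m} (characteristic
  vectors); vector addition is symmetric difference.\<close>

definition vecs :: "nat \<Rightarrow> nat set set" where
  "vecs m = {v. v \<subseteq> {..<2*m}}"

definition vadd :: "nat set \<Rightarrow> nat set \<Rightarrow> nat set" where
  "vadd u v = (u - v) \<union> (v - u)"

definition symp :: "nat \<Rightarrow> nat set \<Rightarrow> nat set \<Rightarrow> bool" where
  "symp m u v = odd (card {i. i < m \<and> 2*i \<in> u \<and> 2*i+1 \<in> v}
                   + card {i. i < m \<and> 2*i+1 \<in> u \<and> 2*i \<in> v})"

definition Sp :: "nat \<Rightarrow> (nat set \<Rightarrow> nat set) set" where
  "Sp m = {g. bij_betw g (vecs m) (vecs m) \<and> (\<forall>x. x \<notin> vecs m \<longrightarrow> g x = x)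
            \<and> (\<forall>u\<in>vecs m. \<forall>v\<in>vecs m. g (vadd u v) = vadd (g u) (g v))
            \<and> (\<forall>u\<in>vecs m. \<forall>v\<in>vecs m. symp m (g u) (g v) = symp m u v)}"

text \<open>Quadratic forms on F_2^(2m) whose polarisation is the symplectic form
  (values True = 1, False = 0; set to False outside the vector space).\<close>
definition qforms :: "nat \<Rightarrow> (nat set \<Rightarrow> bool) set" where
  "qforms m = {Q. (\<forall>v. v \<notin> vecs m \<longrightarrow> \<not> Q v)
      \<and> (\<forall>u\<in>vecs m. \<forall>v\<in>vecs m. Q (vadd u v) = ((Q u \<noteq> Q v) \<noteq> symp m u v))}"

definition is_subspace :: "nat \<Rightarrow> nat set set \<Rightarrow> bool" where
  "is_subspace m W \<longleftrightarrow> W \<subseteq> vecs m \<and> {} \<in> W \<and> (\<forall>u\<in>W. \<forall>v\<in>W. vadd u v \<in> W)"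

text \<open>Plus type: Witt index m, i.e. a totally singular subspace of dimension m
  (2^m elements). Minus type: the remaining (nondegenerate) forms.\<close>
definition plus_type :: "nat \<Rightarrow> (nat set \<Rightarrow> bool) \<Rightarrow> bool" where
  "plus_type m Q \<longleftrightarrow> (\<exists>W. is_subspace m W \<and> card W = 2^m \<and> (\<forall>w\<in>W. \<not> Q w))"

definition qforms_type :: "nat \<Rightarrow> bool \<Rightarrow> (nat set \<Rightarrow> bool) set" where
  "qforms_type m eps = {Q \<in> qforms m. plus_type m Q = eps}"

definition qact :: "(nat set \<Rightarrow> nat set) \<Rightarrow> (nat set \<Rightarrow> bool) \<Rightarrow> (nat set \<Rightarrow> bool)" where
  "qact g Q = Q \<circ> inv g"

text \<open>Proper extension of the G-set (X, xact) to a 2-by-block-transitive action: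
  G is a group of permutations (composition), (Omega, act) a G-set, pi an equivariant
  surjection onto X with blocks of size at least 2, and G transitive on ordered pairs
  of points of Omega lying in distinct blocks.\<close>
definition proper_2bbt_extension ::
  "('v \<Rightarrow> 'v) set \<Rightarrow> (('v \<Rightarrow> 'v) \<Rightarrow> 'x \<Rightarrow> 'x) \<Rightarrow> 'x set
   \<Rightarrow> (('v \<Rightarrow> 'v) \<Rightarrow> 'b \<Rightarrow> 'b) \<Rightarrow> 'b set \<Rightarrow> ('b \<Rightarrow> 'x) \<Rightarrow> bool" where
  "proper_2bbt_extension G xact X act \<Omega> \<pi> \<longleftrightarrow>
     (\<forall>g\<in>G. \<forall>w\<in>\<Omega>. act g w \<in> \<Omega>)
   \<and> (\<forall>w\<in>\<Omega>. act id w = w)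
   \<and> (\<forall>g\<in>G. \<forall>h\<in>G. \<forall>w\<in>\<Omega>. act (g \<circ> h) w = act g (act h w))
   \<and> \<pi> ` \<Omega> = X
   \<and> (\<forall>g\<in>G. \<forall>w\<in>\<Omega>. \<pi> (act g w) = xact g (\<pi> w))
   \<and> (\<forall>x\<in>X. \<exists>a\<in>\<Omega>. \<exists>b\<in>\<Omega>. a \<noteq> b \<and> \<pi> a = x \<and> \<pi> b = x)
   \<and> (\<forall>a\<in>\<Omega>. \<forall>b\<in>\<Omega>. \<forall>c\<in>\<Omega>. \<forall>d\<in>\<Omega>. \<pi> a \<noteq> \<pi> b \<longrightarrow> \<pi> c \<noteq> \<pi> d \<longrightarrow>
        (\<exists>g\<in>G. act g a = c \<and> act g b = d))"

end

theory Submission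
  imports Defs
begin

text \<open>Two quadratic forms polarising to the symplectic form \<open>B\<close> differ by a linear form:
  \<open>Q' = Q + B(a,-)\<close>. The character sum \<open>\<Sum>\<^sub>v (-1)^Q(v)\<close> is \<open>2^m\<close> for forms of \<open>+\<close> type
  and \<open>-2^m\<close> for forms of \<open>-\<close> type: in coordinates it equals \<open>(-1)^Arf(Q) 2^m\<close>, and a form
  with even Arf invariant has a totally singular subspace of dimension \<open>m\<close>, built one hyperbolic
  pair at a time. Replacing \<open>Q\<close> by \<open>Q + B(a,-)\<close> multiplies the sum by \<open>(-1)^Q(a)\<close>, so forms of
  the same type have \<open>Q(a) = 0\<close>, and the transvection \<open>t(v) = v + B(a,v) a\<close> is then an
  involution in \<open>Sp\<close> interchanging \<open>Q\<close> and \<open>Q'\<close>. An element fixing \<open>Q\<close> and \<open>Q'\<close> fixes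
  \<open>B(a,-)\<close>, hence \<open>a\<close> by nondegeneracy, hence commutes with \<open>t\<close>.

  In a 2-by-block-transitive extension choose \<open>\<alpha> \<noteq> \<beta>\<close> in the block over \<open>Q\<close> and \<open>g\<close> with
  \<open>g \<alpha> = \<alpha>\<close>, \<open>g (t \<alpha>) = t \<beta>\<close>. Then \<open>g\<close> fixes \<open>Q\<close> and \<open>Q'\<close>, so \<open>t \<beta> = g (t \<alpha>) = t (g \<alpha>) = t \<alpha>\<close>,
  a contradiction.\<close>

lemma vadd_assoc: "vadd (vadd u v) w = vadd u (vadd v w)"
  unfolding vadd_def by blast

lemma vadd_self [simp]: "vadd u u = {}"
  unfolding vadd_def by blast

lemma vadd_vadd_cancel [simp]: "vadd u (vadd u v) = v" "vadd (vadd v u) u = v"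
  unfolding vadd_def by blast+

lemma vadd_eq_empty_iff: "vadd u v = {} \<longleftrightarrow> u = v"
  unfolding vadd_def by blast

lemma insert_eq_vadd: "x \<notin> v \<Longrightarrow> insert x v = vadd {x} v"
  unfolding vadd_def by blast

lemma odd_card_vadd:
  assumes "finite A" "finite B"
  shows "odd (card (vadd A B)) \<longleftrightarrow> odd (card A) \<noteq> odd (card B)"
proof -
  have "card (vadd A B) = card (A - B) + card (B - A)"
    unfolding vadd_def using assms by (intro card_Un_disjoint) auto
  moreover have "card A = card (A \<inter> B) + card (A - B)" "card B = card (A \<inter> B) + card (B - A)"
    using card_Int_Diff[OF assms(1), of B] card_Int_Diff[OF assms(2), of A] by (simp_all add: Int_commute)
  ultimately show ?thesis by presburger
qed

lemma empty_vecs [simp]: "{} \<in> vecs m"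
  unfolding vecs_def by simp

lemma finite_vecs: "finite (vecs m)"
  unfolding vecs_def by simp

lemma finite_if_vecs: "v \<in> vecs m \<Longrightarrow> finite v"
  unfolding vecs_def using finite_subset by blast

lemma vadd_vecs: "u \<in> vecs m \<Longrightarrow> v \<in> vecs m \<Longrightarrow> vadd u v \<in> vecs m"
  unfolding vecs_def vadd_def by blast

lemma vecs_eq_Pow: "vecs m = Pow {..<2*m}"
  unfolding vecs_def by auto

lemma card_vecs: "card (vecs m) = 2^m * 2^m"
  by (simp add: vecs_eq_Pow card_Pow power_mult mult_2 power_add)

lemma is_subspace_vecs: "is_subspace m (vecs m)"
  unfolding is_subspace_def vecs_def vadd_def by auto

lemma sum_vadd_reindex:
  assumes "\<forall>x\<in>A. vadd e x \<in> A"
  shows "(\<Sum>x\<in>A. g (vadd e x)) = sum g A"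
proof -
  have "bij_betw (vadd e) A A"
    by (rule bij_betw_byWitness[where f' = "vadd e"]) (use assms in auto)
  then show ?thesis by (rule sum.reindex_bij_betw)
qed

section \<open>The symplectic form\<close>

text \<open>\<open>symp m\<close> without the bound \<open>i < m\<close>: it agrees with \<open>symp m\<close> on \<open>vecs m\<close> and is
  bilinear on all finite sets.\<close>

definition bform :: "nat set \<Rightarrow> nat set \<Rightarrow> bool" where
  "bform u v = odd (card {i. 2*i \<in> u \<and> 2*i+1 \<in> v} + card {i. 2*i+1 \<in> u \<and> 2*i \<in> v})"

definition partner :: "nat \<Rightarrow> nat" where
  "partner j = (if even j then Suc j else j - 1)"

lemma partner_partner [simp]: "partner (partner j) = j"
  unfolding partner_def by auto

lemma partner_less: "j < 2*m \<Longrightarrow> partner j < 2*m"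
  unfolding partner_def by auto

lemma partner_new_pair [simp]: "partner (2*m) = Suc (2*m)" "partner (Suc (2*m)) = 2*m"
  unfolding partner_def by auto

lemma finite_even_indices: "finite (u::nat set) \<Longrightarrow> finite {i. 2*i \<in> u \<and> P i}"
  by (rule finite_subset[of _ "(\<lambda>x. x div 2) ` u"]) (auto intro: image_eqI[where x="2*_"])

lemma finite_odd_indices: "finite (u::nat set) \<Longrightarrow> finite {i. 2*i+1 \<in> u \<and> P i}"
  by (rule finite_subset[of _ "(\<lambda>x. x div 2) ` u"]) (auto intro: image_eqI[where x="2*_+1"])

lemma symp_eq_bform:
  assumes "u \<in> vecs m"
  shows "symp m u v = bform u v"
proof -
  have "{i. i < m \<and> 2*i \<in> u \<and> 2*i+1 \<in> v} = {i. 2*i \<in> u \<and> 2*i+1 \<in> v}"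
    "{i. i < m \<and> 2*i+1 \<in> u \<and> 2*i \<in> v} = {i. 2*i+1 \<in> u \<and> 2*i \<in> v}"
    using assms unfolding vecs_def by auto
  then show ?thesis unfolding symp_def bform_def by simp
qed

lemma bform_commute: "bform u v = bform v u"
  unfolding bform_def by (simp add: add.commute conj_commute)

lemma bform_self [simp]: "\<not> bform u u"
  unfolding bform_def by (simp add: conj_commute)

lemma bform_empty [simp]: "\<not> bform {} v" "\<not> bform v {}"
  unfolding bform_def by simp_all

lemma bform_vadd_left:
  assumes "finite u" "finite v"
  shows "bform (vadd u v) w \<longleftrightarrow> bform u w \<noteq> bform v w"
proof -
  have even_part: "{i. 2*i \<in> vadd u v \<and> 2*i+1 \<in> w}
      = vadd {i. 2*i \<in> u \<and> 2*i+1 \<in> w} {i. 2*i \<in> v \<and> 2*i+1 \<in> w}"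
    and odd_part: "{i. 2*i+1 \<in> vadd u v \<and> 2*i \<in> w}
      = vadd {i. 2*i+1 \<in> u \<and> 2*i \<in> w} {i. 2*i+1 \<in> v \<and> 2*i \<in> w}"
    unfolding vadd_def by auto
  have "finite {i. 2*i \<in> u \<and> 2*i+1 \<in> w}" "finite {i. 2*i \<in> v \<and> 2*i+1 \<in> w}"
    "finite {i. 2*i+1 \<in> u \<and> 2*i \<in> w}" "finite {i. 2*i+1 \<in> v \<and> 2*i \<in> w}"
    using assms by (simp_all only: finite_even_indices finite_odd_indices)
  then show ?thesis
    unfolding bform_def odd_add even_part odd_part by (auto simp: odd_card_vadd)
qed

lemma bform_vadd_right:
  "finite u \<Longrightarrow> finite v \<Longrightarrow> bform w (vadd u v) \<longleftrightarrow> bform w u \<noteq> bform w v"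
  using bform_vadd_left bform_commute by metis

lemma bform_singleton: "bform u {x} \<longleftrightarrow> partner x \<in> u"
proof (cases "even x")
  case True
  then obtain k where k: "x = 2*k" by blast
  have no_even: "{i. 2*i \<in> u \<and> 2*i+1 \<in> {x}} = {}" using k by auto presburger
  have "{i. 2*i+1 \<in> u \<and> 2*i \<in> {x}} = (if x+1 \<in> u then {k} else {})" using k by auto
  then show ?thesis unfolding bform_def partner_def no_even using True by simp
next
  case False
  then obtain k where k: "x = 2*k+1" using oddE by blast
  have no_odd: "{i. 2*i+1 \<in> u \<and> 2*i \<in> {x}} = {}" using k by auto presburger
  have "{i. 2*i \<in> u \<and> 2*i+1 \<in> {x}} = (if 2*k \<in> u then {k} else {})" using k by auto
  then show ?thesis unfolding bform_def partner_def no_odd using False k by simp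
qed

lemma bform_nondegenerate:
  assumes "x \<in> vecs m" "\<forall>v\<in>vecs m. \<not> bform x v"
  shows "x = {}"
proof (rule ccontr)
  assume "x \<noteq> {}"
  then obtain j where "j \<in> x" by blast
  moreover have "j < 2*m" using \<open>j \<in> x\<close> assms(1) unfolding vecs_def by auto
  ultimately have "{partner j} \<in> vecs m" "bform x {partner j}"
    using partner_less unfolding vecs_def by (auto simp: bform_singleton)
  then show False using assms(2) by blast
qed

section \<open>Quadratic forms in coordinates\<close>

definition pairs :: "nat set \<Rightarrow> nat set" where
  "pairs v = {i. 2*i \<in> v \<and> 2*i+1 \<in> v}"

text \<open>The quadratic form with polarisation \<open>bform\<close> taking the value \<open>c j\<close> on the basis
  vector \<open>{j}\<close>.\<close>

definition stdq :: "(nat \<Rightarrow> bool) \<Rightarrow> nat set \<Rightarrow> bool" where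
  "stdq c v = odd (card {j\<in>v. c j} + card (pairs v))"

lemma stdq_vadd:
  assumes "finite u" "finite v"
  shows "stdq c (vadd u v) \<longleftrightarrow> (stdq c u \<noteq> stdq c v) \<noteq> bform u v"
proof -
  let ?cross = "vadd {i. 2*i \<in> u \<and> 2*i+1 \<in> v} {i. 2*i+1 \<in> u \<and> 2*i \<in> v}"
  have diagonal: "{j\<in>vadd u v. c j} = vadd {j\<in>u. c j} {j\<in>v. c j}"
    unfolding vadd_def by auto
  have pairs: "pairs (vadd u v) = vadd (vadd (pairs u) (pairs v)) ?cross"
    unfolding vadd_def pairs_def by auto
  have "finite {j\<in>u. c j}" "finite {j\<in>v. c j}" "finite (pairs u)" "finite (pairs v)"
    "finite {i. 2*i \<in> u \<and> 2*i+1 \<in> v}" "finite {i. 2*i+1 \<in> u \<and> 2*i \<in> v}"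
    using assms unfolding pairs_def by (simp_all only: finite_even_indices finite_odd_indices) auto
  moreover from this have "finite (vadd (pairs u) (pairs v))" "finite ?cross"
    unfolding vadd_def by auto
  ultimately show ?thesis
    unfolding stdq_def bform_def diagonal pairs odd_add by (auto simp: odd_card_vadd)
qed

lemma stdq_empty [simp]: "\<not> stdq c {}"
  unfolding stdq_def pairs_def by simp

lemma stdq_singleton [simp]: "stdq c {x} = c x"
proof -
  have "pairs {x} = {}" unfolding pairs_def by auto
  moreover have "{j\<in>{x}. c j} = (if c x then {x} else {})" by auto
  ultimately show ?thesis unfolding stdq_def by auto
qed

lemma stdq_insert:
  assumes "finite v" "x \<notin> v"
  shows "stdq c (insert x v) \<longleftrightarrow> (c x \<noteq> stdq c v) \<noteq> (partner x \<in> v)"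
  unfolding insert_eq_vadd[OF assms(2)] using assms(1)
  by (simp add: stdq_vadd bform_commute[of "{x}"] bform_singleton)

lemma qform_vadd:
  "Q \<in> qforms m \<Longrightarrow> u \<in> vecs m \<Longrightarrow> v \<in> vecs m \<Longrightarrow> Q (vadd u v) \<longleftrightarrow> (Q u \<noteq> Q v) \<noteq> bform u v"
  unfolding qforms_def using symp_eq_bform by auto

lemma qform_empty: "Q \<in> qforms m \<Longrightarrow> \<not> Q {}"
  using qform_vadd[of Q m "{}" "{}"] by simp

lemma qform_outside: "Q \<in> qforms m \<Longrightarrow> v \<notin> vecs m \<Longrightarrow> \<not> Q v"
  unfolding qforms_def by auto

lemma vecs_induct [consumes 1, case_names empty insert]:
  assumes "v \<in> vecs m" "P {}"
    and "\<And>x v. x < 2*m \<Longrightarrow> v \<in> vecs m \<Longrightarrow> x \<notin> v \<Longrightarrow> P v \<Longrightarrow> P (insert x v)"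
  shows "P v"
proof -
  have "finite v" "v \<subseteq> {..<2*m}" using assms(1) unfolding vecs_def by (auto intro: finite_subset)
  then show ?thesis
    by (induction v rule: finite_induct) (use assms(2,3) in \<open>auto simp: vecs_def\<close>)
qed

lemma qform_eq_stdq:
  assumes "Q \<in> qforms m" "v \<in> vecs m"
  shows "Q v = stdq (\<lambda>j. Q {j}) v"
  using assms(2)
proof (induction rule: vecs_induct)
  case empty
  then show ?case using qform_empty[OF assms(1)] by simp
next
  case (insert x v)
  then have "{x} \<in> vecs m" unfolding vecs_def by auto
  with insert show ?case
    unfolding insert_eq_vadd[OF insert.hyps(3)] using qform_vadd[OF assms(1)] finite_if_vecs
    by (simp add: stdq_vadd bform_commute[of "{x}"] bform_singleton)
qed

lemma additive_eq_bform:
  assumes additive: "\<And>u v. u \<in> vecs m \<Longrightarrow> v \<in> vecs m \<Longrightarrow> \<phi> (vadd u v) \<longleftrightarrow> \<phi> u \<noteq> \<phi> v"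
  shows "\<exists>a\<in>vecs m. \<forall>v\<in>vecs m. \<phi> v = bform a v"
proof
  let ?a = "{j. j < 2*m \<and> \<phi> {partner j}}"
  show "?a \<in> vecs m" unfolding vecs_def by auto
  show "\<forall>v\<in>vecs m. \<phi> v = bform ?a v"
  proof
    fix v assume "v \<in> vecs m"
    then show "\<phi> v = bform ?a v"
    proof (induction rule: vecs_induct)
      case empty
      show ?case using additive[of "{}" "{}"] by simp
    next
      case (insert x v)
      then have "{x} \<in> vecs m" unfolding vecs_def by auto
      then have "\<phi> (vadd {x} v) \<longleftrightarrow> \<phi> {x} \<noteq> \<phi> v"
        "bform ?a (vadd {x} v) \<longleftrightarrow> bform ?a {x} \<noteq> bform ?a v"
        using additive insert.hyps(2) finite_if_vecs by (auto simp only: bform_vadd_right)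
      moreover have "bform ?a {x} = \<phi> {x}"
        using partner_less[OF insert.hyps(1)] by (simp add: bform_singleton)
      ultimately show ?case
        unfolding insert_eq_vadd[OF insert.hyps(3)] using insert.IH by simp
    qed
  qed
qed

lemma qforms_differ_by_bform:
  assumes "Q \<in> qforms m" "Q' \<in> qforms m"
  shows "\<exists>a\<in>vecs m. \<forall>v\<in>vecs m. Q' v \<longleftrightarrow> Q v \<noteq> bform a v"
proof -
  have "(Q (vadd u v) \<noteq> Q' (vadd u v)) \<longleftrightarrow> (Q u \<noteq> Q' u) \<noteq> (Q v \<noteq> Q' v)"
    if "u \<in> vecs m" "v \<in> vecs m" for u v
    using qform_vadd[OF assms(1) that] qform_vadd[OF assms(2) that] by auto
  from additive_eq_bform[where m = m and \<phi> = "\<lambda>v. Q v \<noteq> Q' v", OF this] show ?thesis by auto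
qed

section \<open>Character sums\<close>

definition chi :: "bool \<Rightarrow> int" where
  "chi b = (if b then -1 else 1)"

definition char_sum :: "nat \<Rightarrow> (nat set \<Rightarrow> bool) \<Rightarrow> int" where
  "char_sum m Q = (\<Sum>v\<in>vecs m. chi (Q v))"

text \<open>Modulo 2, this is the Arf invariant of \<open>stdq c\<close>.\<close>

definition arf :: "nat \<Rightarrow> (nat \<Rightarrow> bool) \<Rightarrow> nat" where
  "arf m c = card {i. i < m \<and> c (2*i) \<and> c (2*i+1)}"

lemma arf_Suc: "arf (Suc m) c = arf m c + (if c (2*m) \<and> c (2*m+1) then 1 else 0)"
proof -
  have "{i. i < Suc m \<and> c (2*i) \<and> c (2*i+1)} =
     {i. i < m \<and> c (2*i) \<and> c (2*i+1)} \<union> (if c (2*m) \<and> c (2*m+1) then {m} else {})"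
    by (auto simp: less_Suc_eq)
  then show ?thesis unfolding arf_def by auto
qed

lemma sum_Pow_insert:
  assumes "finite B" "x \<notin> B"
  shows "sum f (Pow (insert x B)) = sum f (Pow B) + (\<Sum>v\<in>Pow B. f (insert x v))"
proof -
  have "inj_on (insert x) (Pow B)"
    using assms(2) unfolding inj_on_def by (metis PowD Diff_insert_absorb subsetD)
  moreover have "Pow B \<inter> insert x ` Pow B = {}" using assms by auto
  ultimately show ?thesis
    using assms by (simp add: Pow_insert sum.union_disjoint sum.reindex)
qed

lemma sum_vecs_Suc:
  "sum f (vecs (Suc m)) = (\<Sum>v\<in>vecs m. f v + f (insert (2*m) v) + f (insert (2*m+1) v)
     + f (insert (2*m+1) (insert (2*m) v)))"
proof -
  have "vecs (Suc m) = Pow (insert (2*m+1) (insert (2*m) {..<2*m}))"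
    unfolding vecs_def by auto
  then show ?thesis
    by (simp add: sum_Pow_insert vecs_eq_Pow sum.distrib add.assoc)
qed

lemma chi_stdq_new_pair:
  assumes "v \<in> vecs m"
  shows "chi (stdq c v) + chi (stdq c (insert (2*m) v)) + chi (stdq c (insert (2*m+1) v))
      + chi (stdq c (insert (2*m+1) (insert (2*m) v)))
    = (if c (2*m) \<and> c (2*m+1) then -2 else 2) * chi (stdq c v)"
proof -
  have "finite v" "2*m \<notin> v" "2*m+1 \<notin> v"
    using assms unfolding vecs_def by (auto intro: finite_subset)
  then show ?thesis by (simp add: stdq_insert chi_def)
qed

lemma char_sum_stdq: "char_sum m (stdq c) = (if even (arf m c) then 2^m else - (2^m))"
proof (induction m)
  case 0
  have "vecs 0 = {{}}" unfolding vecs_def by auto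
  then show ?case unfolding arf_def char_sum_def chi_def by simp
next
  case (Suc m)
  have "char_sum (Suc m) (stdq c) = (if c (2*m) \<and> c (2*m+1) then -2 else 2) * char_sum m (stdq c)"
    unfolding char_sum_def sum_vecs_Suc sum_distrib_left by (intro sum.cong refl chi_stdq_new_pair)
  then show ?case by (simp add: Suc.IH arf_Suc)
qed

definition orth :: "nat \<Rightarrow> nat set set \<Rightarrow> nat set set" where
  "orth m W = {v\<in>vecs m. \<forall>w\<in>W. \<not> bform v w}"

lemma sum_chi_bform:
  assumes "is_subspace m W" "v \<in> vecs m"
  shows "(\<Sum>w\<in>W. chi (bform v w)) = (if v \<in> orth m W then int (card W) else 0)"
proof (cases "v \<in> orth m W")
  case True
  then show ?thesis unfolding orth_def chi_def by simp
next
  case False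
  then obtain w0 where w0: "w0 \<in> W" "bform v w0" unfolding orth_def using assms(2) by auto
  have closed: "\<forall>w\<in>W. vadd w0 w \<in> W" and fin: "\<forall>w\<in>W. finite w"
    using assms(1) w0(1) finite_if_vecs unfolding is_subspace_def by blast+
  have "(\<Sum>w\<in>W. chi (bform v w)) = (\<Sum>w\<in>W. chi (bform v (vadd w0 w)))"
    by (rule sum_vadd_reindex[OF closed, symmetric])
  also have "\<dots> = (\<Sum>w\<in>W. - chi (bform v w))"
    using w0 fin by (intro sum.cong refl) (simp add: bform_vadd_right chi_def)
  also have "\<dots> = - (\<Sum>w\<in>W. chi (bform v w))"
    by (simp add: sum_negf)
  finally show ?thesis using False by simp
qed

lemma orth_vecs: "orth m (vecs m) = {{}}"
  unfolding orth_def using bform_nondegenerate by auto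

lemma card_orth:
  assumes "is_subspace m W"
  shows "card W * card (orth m W) = 2^m * 2^m"
proof -
  let ?V = "vecs m"
  have W: "W \<subseteq> ?V" "{} \<in> W" using assms unfolding is_subspace_def by auto
  have "?V \<inter> {v. v \<in> orth m W} = orth m W" unfolding orth_def by auto
  then have "int (card W * card (orth m W)) = (\<Sum>v\<in>?V. if v \<in> orth m W then int (card W) else 0)"
    using finite_vecs by (simp add: sum.If_cases)
  also have "\<dots> = (\<Sum>v\<in>?V. \<Sum>w\<in>W. chi (bform v w))"
    using sum_chi_bform[OF assms] by simp
  also have "\<dots> = (\<Sum>w\<in>W. \<Sum>v\<in>?V. chi (bform w v))"
    by (subst sum.swap) (simp add: bform_commute)
  also have "\<dots> = (\<Sum>w\<in>W. if w = {} then int (card ?V) else 0)"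
  proof (intro sum.cong refl)
    fix w assume "w \<in> W"
    then have "w \<in> ?V" using W(1) by blast
    then show "(\<Sum>v\<in>?V. chi (bform w v)) = (if w = {} then int (card ?V) else 0)"
      using sum_chi_bform[OF is_subspace_vecs] by (simp add: orth_vecs)
  qed
  also have "\<dots> = int (card ?V)"
    using W finite_subset[OF W(1) finite_vecs] by simp
  finally show ?thesis by (simp only: of_nat_eq_iff card_vecs)
qed

lemma totally_singular_orth_eq:
  assumes Q: "Q \<in> qforms m" and W: "is_subspace m W" "card W = 2^m" "\<forall>w\<in>W. \<not> Q w"
  shows "orth m W = W"
proof -
  have WV: "W \<subseteq> vecs m" and closed: "\<forall>u\<in>W. \<forall>v\<in>W. vadd u v \<in> W"
    using W(1) unfolding is_subspace_def by auto
  have "W \<subseteq> orth m W"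
  proof
    fix u assume u: "u \<in> W"
    have "\<not> bform u w" if w: "w \<in> W" for w
      using qform_vadd[OF Q, of u w] closed u w W(3) WV by blast
    then show "u \<in> orth m W" unfolding orth_def using u WV by blast
  qed
  moreover have "card (orth m W) = card W"
    using card_orth[OF W(1)] W(2) by simp
  moreover have "finite (orth m W)" unfolding orth_def using finite_vecs by simp
  ultimately show ?thesis by (metis card_subset_eq)
qed

lemma char_sum_totally_singular:
  assumes Q: "Q \<in> qforms m" and W: "is_subspace m W" "card W = 2^m" "\<forall>w\<in>W. \<not> Q w"
  shows "char_sum m Q = 2^m"
proof -
  let ?V = "vecs m"
  have WV: "W \<subseteq> ?V" using W(1) unfolding is_subspace_def by auto
  have shift: "(\<Sum>v\<in>?V. chi (Q v) * chi (bform v w)) = char_sum m Q" if "w \<in> W" for w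
  proof -
    have "(\<Sum>v\<in>?V. chi (Q v) * chi (bform v w)) = (\<Sum>v\<in>?V. chi (Q (vadd w v)))"
      using that WV W(3) qform_vadd[OF Q] by (intro sum.cong) (auto simp: bform_commute chi_def)
    also have "\<dots> = char_sum m Q"
      unfolding char_sum_def using that WV vadd_vecs by (intro sum_vadd_reindex) blast
    finally show ?thesis .
  qed
  have "int (card W) * char_sum m Q = (\<Sum>w\<in>W. \<Sum>v\<in>?V. chi (Q v) * chi (bform v w))"
    using shift by simp
  also have "\<dots> = (\<Sum>v\<in>?V. chi (Q v) * (\<Sum>w\<in>W. chi (bform v w)))"
    by (subst sum.swap) (simp add: sum_distrib_left)
  also have "\<dots> = (\<Sum>v\<in>?V. if v \<in> W then int (card W) else 0)"
    using sum_chi_bform[OF W(1)] totally_singular_orth_eq[OF Q W] W(3)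
    by (intro sum.cong) (auto simp: chi_def)
  also have "\<dots> = int (card W) * int (card W)"
    using finite_vecs WV by (simp add: sum.If_cases Int_absorb1)
  finally show ?thesis using W(2) by simp
qed

section \<open>The type of a form and its character sum\<close>

lemma is_subspace_Suc: "is_subspace m W \<Longrightarrow> is_subspace (Suc m) W"
  unfolding is_subspace_def vecs_def by fastforce

lemma new_pair_notin_vecs: "v \<in> vecs m \<Longrightarrow> 2*m \<notin> v \<and> Suc (2*m) \<notin> v"
  unfolding vecs_def by auto

lemma is_subspace_extend:
  assumes W: "is_subspace m W" and e: "e \<in> vecs m" "e \<notin> W"
  shows "is_subspace m (W \<union> vadd e ` W)" "card (W \<union> vadd e ` W) = 2 * card W"
proof -
  have closed: "\<And>u v. u \<in> W \<Longrightarrow> v \<in> W \<Longrightarrow> vadd u v \<in> W" and WV: "W \<subseteq> vecs m"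
    using W unfolding is_subspace_def by auto
  have shift: "vadd (vadd e a) b = vadd e (vadd a b)" "vadd a (vadd e b) = vadd e (vadd a b)"
    "vadd (vadd e a) (vadd e b) = vadd a b" for a b
    unfolding vadd_def by blast+
  show "is_subspace m (W \<union> vadd e ` W)"
    unfolding is_subspace_def
  proof (intro conjI ballI)
    show "W \<union> vadd e ` W \<subseteq> vecs m" using WV e(1) vadd_vecs by blast
    show "{} \<in> W \<union> vadd e ` W" using W unfolding is_subspace_def by blast
  next
    fix x y assume "x \<in> W \<union> vadd e ` W" "y \<in> W \<union> vadd e ` W"
    then show "vadd x y \<in> W \<union> vadd e ` W"
      by (elim UnE imageE) (simp_all add: shift closed)
  qed
  have "W \<inter> vadd e ` W = {}"
  proof (rule ccontr)
    assume "W \<inter> vadd e ` W \<noteq> {}"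
    then obtain w1 w2 where "w1 \<in> W" "w2 \<in> W" "w1 = vadd e w2" by blast
    then have "e \<in> W" using closed[of w1 w2] by (simp add: vadd_assoc)
    then show False using e(2) by contradiction
  qed
  moreover have "inj_on (vadd e) W" by (metis inj_onI vadd_vadd_cancel(1))
  moreover have "finite W" using WV finite_vecs finite_subset by blast
  ultimately show "card (W \<union> vadd e ` W) = 2 * card W"
    by (simp add: card_Un_disjoint card_image)
qed

lemma is_subspace_extend_new:
  assumes W: "is_subspace m W" "card W = 2^m" and x: "x = 2*m \<or> x = Suc (2*m)"
  shows "is_subspace (Suc m) (W \<union> vadd {x} ` W)" "card (W \<union> vadd {x} ` W) = 2^Suc m"
proof -
  have "{x} \<in> vecs (Suc m)" using x unfolding vecs_def by auto
  moreover have "{x} \<notin> W"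
    using x W(1) new_pair_notin_vecs unfolding is_subspace_def by blast
  ultimately show "is_subspace (Suc m) (W \<union> vadd {x} ` W)" "card (W \<union> vadd {x} ` W) = 2^Suc m"
    using is_subspace_extend[OF is_subspace_Suc[OF W(1)]] W(2) by auto
qed

text \<open>The invariant of the pair-by-pair construction of a totally singular subspace: an
  \<open>m\<close>-dimensional subspace on which \<open>stdq c\<close> restricts to a linear form, zero exactly
  when the Arf invariant is even.\<close>

definition arf_subspace :: "nat \<Rightarrow> (nat \<Rightarrow> bool) \<Rightarrow> nat set set \<Rightarrow> bool" where
  "arf_subspace m c W \<longleftrightarrow> is_subspace m W \<and> card W = 2^m \<and>
     (if even (arf m c) then \<forall>w\<in>W. \<not> stdq c w
      else \<exists>j<2*m. c (partner j) \<and> (\<forall>w\<in>W. stdq c w = (j \<in> w)))"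

lemma stdq_vadd_new:
  assumes "w \<in> vecs m" "x = 2*m \<or> x = Suc (2*m)"
  shows "stdq c (vadd {x} w) \<longleftrightarrow> c x \<noteq> stdq c w"
proof -
  have "x \<notin> w" "partner x \<notin> w"
    using assms(2) new_pair_notin_vecs[OF assms(1)] by auto
  then show ?thesis
    using stdq_insert[OF finite_if_vecs[OF assms(1)]] insert_eq_vadd by metis
qed

lemma arf_subspace_Suc_isotropic:
  assumes "arf_subspace m c W" and x: "x = 2*m \<or> x = Suc (2*m)" "\<not> c x"
  shows "arf_subspace (Suc m) c (W \<union> vadd {x} ` W)"
proof -
  let ?W' = "W \<union> vadd {x} ` W"
  from assms(1) have W: "is_subspace m W" "card W = 2^m"
    and lin: "if even (arf m c) then \<forall>w\<in>W. \<not> stdq c w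
      else \<exists>j<2*m. c (partner j) \<and> (\<forall>w\<in>W. stdq c w = (j \<in> w))"
    unfolding arf_subspace_def by blast+
  have arf_eq: "arf (Suc m) c = arf m c" using x by (auto simp: arf_Suc)
  have stdq_shift: "stdq c (vadd {x} w) = stdq c w" if "w \<in> W" for w
    using that W(1) stdq_vadd_new[OF _ x(1)] x(2) unfolding is_subspace_def by blast
  have coord: "j \<in> vadd {x} w \<longleftrightarrow> j \<in> w" if "j < 2*m" for j w
    using that x(1) unfolding vadd_def by auto
  show ?thesis
  proof (cases "even (arf m c)")
    case True
    then have "\<forall>w\<in>?W'. \<not> stdq c w" using lin stdq_shift by auto
    then show ?thesis
      unfolding arf_subspace_def using True arf_eq is_subspace_extend_new[OF W x(1)] by simp
  next
    case False
    then obtain j where j: "j < 2*m" "c (partner j)" "\<forall>w\<in>W. stdq c w = (j \<in> w)"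
      using lin by auto
    then have "\<forall>w\<in>?W'. stdq c w = (j \<in> w)" using stdq_shift coord by auto
    with j have "\<exists>j<2 * Suc m. c (partner j) \<and> (\<forall>w\<in>?W'. stdq c w = (j \<in> w))"
      by (intro exI[of _ j]) auto
    then show ?thesis
      unfolding arf_subspace_def using False arf_eq is_subspace_extend_new[OF W x(1)] by simp
  qed
qed

lemma arf_subspace_Suc_anisotropic_even:
  assumes "arf_subspace m c W" "even (arf m c)" "c (2*m)" "c (Suc (2*m))"
  shows "arf_subspace (Suc m) c (W \<union> vadd {2*m} ` W)"
proof -
  let ?W' = "W \<union> vadd {2*m} ` W"
  from assms(1,2) have W: "is_subspace m W" "card W = 2^m" and zero: "\<forall>w\<in>W. \<not> stdq c w"
    unfolding arf_subspace_def by simp_all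
  have "stdq c w = (2*m \<in> w)" if "w \<in> ?W'" for w
  proof -
    obtain v where v: "v \<in> W" "w = v \<or> w = vadd {2*m} v" using \<open>w \<in> ?W'\<close> by blast
    then have "v \<in> vecs m" using W(1) unfolding is_subspace_def by blast
    then show ?thesis
      using v zero new_pair_notin_vecs[of v m] stdq_vadd_new[of v m "2*m" c] assms(3)
      unfolding vadd_def by auto
  qed
  then have "\<exists>j<2 * Suc m. c (partner j) \<and> (\<forall>w\<in>?W'. stdq c w = (j \<in> w))"
    using assms(4) by (intro exI[of _ "2*m"]) simp
  moreover have "odd (arf (Suc m) c)" using assms(2-4) by (simp add: arf_Suc)
  ultimately show ?thesis
    unfolding arf_subspace_def using is_subspace_extend_new[OF W] by simp
qed

lemma is_subspace_twist:
  fixes j m :: nat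
  defines "f \<equiv> \<lambda>w. if j \<in> w then insert (2*m) w else w"
  assumes W: "is_subspace m W"
  shows "is_subspace (Suc m) (f ` W)" "card (f ` W) = card W"
proof -
  have WV: "W \<subseteq> vecs m" and closed: "\<And>u v. u \<in> W \<Longrightarrow> v \<in> W \<Longrightarrow> vadd u v \<in> W"
    using W unfolding is_subspace_def by auto
  have fresh: "2*m \<notin> w" if "w \<in> W" for w
    using that WV new_pair_notin_vecs by blast
  have additive: "f (vadd u v) = vadd (f u) (f v)" if "u \<in> W" "v \<in> W" for u v
    using fresh[OF that(1)] fresh[OF that(2)] unfolding f_def vadd_def by auto
  show "is_subspace (Suc m) (f ` W)"
    unfolding is_subspace_def
  proof (intro conjI ballI)
    have "f w \<subseteq> {..<2 * Suc m}" if "w \<in> W" for w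
    proof -
      have "w \<subseteq> {..<2*m}" using that WV unfolding vecs_def by blast
      then show ?thesis unfolding f_def by auto
    qed
    then show "f ` W \<subseteq> vecs (Suc m)" unfolding vecs_def by blast
    show "{} \<in> f ` W" using W unfolding f_def is_subspace_def by force
  next
    fix u v assume "u \<in> f ` W" "v \<in> f ` W"
    then obtain a b where "a \<in> W" "b \<in> W" "u = f a" "v = f b" by blast
    then have "vadd u v = f (vadd a b)" "vadd a b \<in> W" using additive closed by simp_all
    then show "vadd u v \<in> f ` W" by blast
  qed
  have "f w - {2*m} = w" if "w \<in> W" for w
    using fresh[OF that] unfolding f_def by auto
  then have "inj_on f W" by (metis inj_onI)
  then show "card (f ` W) = card W" by (rule card_image)
qed

lemma arf_subspace_Suc_anisotropic_odd:
  assumes "arf_subspace m c W" "odd (arf m c)" and c: "c (2*m)" "c (Suc (2*m))"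
  shows "\<exists>W'. arf_subspace (Suc m) c W'"
proof -
  from assms(1,2) have W: "is_subspace m W" "card W = 2^m"
    and "\<exists>j<2*m. c (partner j) \<and> (\<forall>w\<in>W. stdq c w = (j \<in> w))"
    unfolding arf_subspace_def by simp_all
  then obtain j where j: "j < 2*m" "c (partner j)" "\<forall>w\<in>W. stdq c w = (j \<in> w)" by blast
  txt \<open>Twisting by the coordinate \<open>2m\<close> cancels the functional \<open>j\<close> on \<open>W\<close>, and
    \<open>u\<close> is a singular vector orthogonal to the twisted copy.\<close>
  define f where "f w = (if j \<in> w then insert (2*m) w else w)" for w
  define u where "u = {partner j, Suc (2*m)}"
  have W1: "is_subspace (Suc m) (f ` W)" "card (f ` W) = 2^m"
    using is_subspace_twist[OF W(1), of j] W(2) unfolding f_def by simp_all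
  have fresh: "2*m \<notin> w" "Suc (2*m) \<notin> w" "partner j \<noteq> Suc (2*m)" "finite w" if "w \<in> W" for w
    using that W(1) new_pair_notin_vecs partner_less[OF j(1)] finite_if_vecs
    unfolding is_subspace_def by auto
  have "Suc (2*m) \<notin> f w" if "w \<in> W" for w
    using fresh[OF that] unfolding f_def by auto
  then have u: "u = vadd {partner j} {Suc (2*m)}" "u \<in> vecs (Suc m)" "u \<notin> f ` W"
    using partner_less[OF j(1)] unfolding u_def vadd_def vecs_def by auto
  have singular_twist: "\<not> stdq c (f w)" if "w \<in> W" for w
    using fresh[OF that] j(3) that c(1) stdq_insert[of w "2*m" c] unfolding f_def by auto
  have singular_u: "\<not> stdq c u"
    using u(1) j(1,2) c(2) partner_less[OF j(1)] by (simp add: stdq_vadd bform_singleton)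
  have orth_u: "\<not> bform u (f w)" if "w \<in> W" for w
  proof -
    have "finite (f w)" using fresh[OF that] unfolding f_def by simp
    then have "bform (f w) u \<longleftrightarrow> (j \<in> f w) \<noteq> (2*m \<in> f w)"
      unfolding u(1) by (simp add: bform_vadd_right bform_singleton)
    then show ?thesis using fresh[OF that] j(1) bform_commute unfolding f_def by auto
  qed
  have "\<not> stdq c (vadd u (f w))" if "w \<in> W" for w
    using singular_u singular_twist[OF that] orth_u[OF that] fresh[OF that]
    by (simp add: stdq_vadd u_def f_def)
  then have "\<forall>w\<in>f ` W \<union> vadd u ` f ` W. \<not> stdq c w" using singular_twist by blast
  moreover have "even (arf (Suc m) c)" using assms(2) c by (simp add: arf_Suc)
  ultimately have "arf_subspace (Suc m) c (f ` W \<union> vadd u ` f ` W)"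
    unfolding arf_subspace_def using is_subspace_extend[OF W1(1) u(2,3)] W1(2) by simp
  then show ?thesis ..
qed

lemma arf_subspace_exists: "\<exists>W. arf_subspace m c W"
proof (induction m)
  case 0
  have "vecs 0 = {{}}" unfolding vecs_def by auto
  then have "arf_subspace 0 c {{}}"
    unfolding arf_subspace_def is_subspace_def arf_def by simp
  then show ?case ..
next
  case (Suc m)
  then obtain W where W: "arf_subspace m c W" ..
  show ?case
  proof (cases "c (2*m) \<and> c (Suc (2*m))")
    case True
    then show ?thesis
      using arf_subspace_Suc_anisotropic_even[OF W] arf_subspace_Suc_anisotropic_odd[OF W] by blast
  next
    case False
    then obtain x where "x = 2*m \<or> x = Suc (2*m)" "\<not> c x" by blast
    then show ?thesis using arf_subspace_Suc_isotropic[OF W] by blast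
  qed
qed

lemma plus_type_if_even_arf:
  assumes Q: "Q \<in> qforms m" and even: "even (arf m (\<lambda>j. Q {j}))"
  shows "plus_type m Q"
proof -
  obtain W where "arf_subspace m (\<lambda>j. Q {j}) W" using arf_subspace_exists ..
  then have W: "is_subspace m W" "card W = 2^m" "\<forall>w\<in>W. \<not> stdq (\<lambda>j. Q {j}) w"
    using even unfolding arf_subspace_def by simp_all
  moreover have "\<forall>w\<in>W. \<not> Q w"
    using W(1,3) qform_eq_stdq[OF Q] unfolding is_subspace_def by blast
  ultimately show ?thesis unfolding plus_type_def by blast
qed

lemma char_sum_qform:
  assumes Q: "Q \<in> qforms m"
  shows "char_sum m Q = (if plus_type m Q then 2^m else - (2^m))"
proof -
  have "char_sum m Q = char_sum m (stdq (\<lambda>j. Q {j}))"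
    unfolding char_sum_def using qform_eq_stdq[OF Q] by simp
  also have "\<dots> = (if even (arf m (\<lambda>j. Q {j})) then 2^m else - (2^m))"
    by (rule char_sum_stdq)
  finally have arf_sum: "char_sum m Q = (if even (arf m (\<lambda>j. Q {j})) then 2^m else - (2^m))" .
  show ?thesis
  proof (cases "plus_type m Q")
    case True
    then show ?thesis
      using char_sum_totally_singular[OF Q] unfolding plus_type_def by auto
  next
    case False
    then show ?thesis using arf_sum plus_type_if_even_arf[OF Q] by auto
  qed
qed

lemma char_sum_add_bform:
  assumes Q: "Q \<in> qforms m" and a: "a \<in> vecs m"
    and Q': "\<forall>v\<in>vecs m. Q' v \<longleftrightarrow> Q v \<noteq> bform a v"
  shows "char_sum m Q = chi (Q a) * char_sum m Q'"
proof -
  have "char_sum m Q = (\<Sum>v\<in>vecs m. chi (Q (vadd a v)))"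
    unfolding char_sum_def using a vadd_vecs by (intro sum_vadd_reindex[symmetric]) blast
  also have "\<dots> = (\<Sum>v\<in>vecs m. chi (Q a) * chi (Q' v))"
    using qform_vadd[OF Q a] Q' by (intro sum.cong refl) (auto simp: chi_def)
  finally show ?thesis unfolding char_sum_def by (simp add: sum_distrib_left)
qed

lemma same_type_add_bform_singular:
  assumes Q: "Q \<in> qforms m" and Q': "Q' \<in> qforms m" and a: "a \<in> vecs m"
    and add_bform: "\<forall>v\<in>vecs m. Q' v \<longleftrightarrow> Q v \<noteq> bform a v"
    and same_type: "plus_type m Q = plus_type m Q'"
  shows "\<not> Q a"
proof
  assume "Q a"
  then have "char_sum m Q = - char_sum m Q'"
    using char_sum_add_bform[OF Q a add_bform] by (simp add: chi_def)
  then show False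
    using char_sum_qform[OF Q] char_sum_qform[OF Q'] same_type by (simp split: if_splits)
qed

section \<open>The symplectic group and transvections\<close>

lemma Sp_vecs: "g \<in> Sp m \<Longrightarrow> v \<in> vecs m \<Longrightarrow> g v \<in> vecs m"
  unfolding Sp_def bij_betw_def by auto

lemma Sp_outside: "g \<in> Sp m \<Longrightarrow> v \<notin> vecs m \<Longrightarrow> g v = v"
  unfolding Sp_def by auto

lemma Sp_vadd: "g \<in> Sp m \<Longrightarrow> u \<in> vecs m \<Longrightarrow> v \<in> vecs m \<Longrightarrow> g (vadd u v) = vadd (g u) (g v)"
  unfolding Sp_def by auto

lemma Sp_bform:
  assumes "g \<in> Sp m" "u \<in> vecs m" "v \<in> vecs m"
  shows "bform (g u) (g v) = bform u v"
proof -
  have "symp m (g u) (g v) = symp m u v" using assms unfolding Sp_def by blast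
  then show ?thesis using assms(2) Sp_vecs[OF assms(1,2)] by (simp add: symp_eq_bform)
qed

lemma Sp_image: "g \<in> Sp m \<Longrightarrow> g ` vecs m = vecs m"
  unfolding Sp_def bij_betw_def by auto

lemma bij_if_Sp:
  assumes g: "g \<in> Sp m"
  shows "bij g"
proof -
  have "bij_betw g (vecs m) (vecs m)" using g unfolding Sp_def by simp
  moreover have "bij_betw g (- vecs m) (- vecs m)"
    using bij_betw_cong[of "- vecs m" g id] Sp_outside[OF g] bij_betw_id by simp
  ultimately have "bij_betw g (vecs m \<union> - vecs m) (vecs m \<union> - vecs m)"
    by (rule bij_betw_combine) simp
  then show ?thesis by simp
qed

lemma Sp_comp:
  assumes g: "g \<in> Sp m" and h: "h \<in> Sp m"
  shows "g \<circ> h \<in> Sp m"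
proof -
  have "bij_betw h (vecs m) (vecs m)" "bij_betw g (vecs m) (vecs m)"
    using g h unfolding Sp_def by simp_all
  then have "bij_betw (g \<circ> h) (vecs m) (vecs m)" by (rule bij_betw_trans)
  moreover have "symp m (g (h u)) (g (h v)) = symp m u v" if "u \<in> vecs m" "v \<in> vecs m" for u v
    using that Sp_bform[OF h that] Sp_bform[OF g Sp_vecs[OF h that(1)] Sp_vecs[OF h that(2)]]
      Sp_vecs[OF g Sp_vecs[OF h that(1)]] by (simp add: symp_eq_bform)
  moreover have "g (h (vadd u v)) = vadd (g (h u)) (g (h v))" if "u \<in> vecs m" "v \<in> vecs m" for u v
    using that Sp_vadd[OF g] Sp_vadd[OF h] Sp_vecs[OF h] by simp
  moreover have "g (h x) = x" if "x \<notin> vecs m" for x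
    using that Sp_outside[OF g] Sp_outside[OF h] by simp
  ultimately show ?thesis unfolding Sp_def by simp
qed

lemma qact_comp: "bij f \<Longrightarrow> bij g \<Longrightarrow> qact (f \<circ> g) Q = qact f (qact g Q)"
  unfolding qact_def by (simp add: o_inv_distrib o_assoc)

lemma qact_comp_Sp: "\<forall>g\<in>Sp m. \<forall>h\<in>Sp m. \<forall>Q. qact (g \<circ> h) Q = qact g (qact h Q)"
  using qact_comp[OF bij_if_Sp bij_if_Sp] by blast

lemma qact_fixed: "bij g \<Longrightarrow> qact g Q = Q \<Longrightarrow> Q (g v) = Q v"
  unfolding qact_def by (metis bij_inv_eq_iff comp_apply)

lemma qact_involution: "s \<circ> s = id \<Longrightarrow> qact s Q = Q \<circ> s"
  unfolding qact_def using inv_unique_comp by metis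

definition transvection :: "nat \<Rightarrow> nat set \<Rightarrow> nat set \<Rightarrow> nat set" where
  "transvection m a v = (if v \<in> vecs m \<and> bform a v then vadd a v else v)"

lemma transvection_vecs: "a \<in> vecs m \<Longrightarrow> v \<in> vecs m \<Longrightarrow> transvection m a v \<in> vecs m"
  unfolding transvection_def using vadd_vecs by auto

lemma transvection_involution:
  assumes a: "a \<in> vecs m"
  shows "transvection m a \<circ> transvection m a = id"
proof
  fix v
  show "(transvection m a \<circ> transvection m a) v = id v"
  proof (cases "v \<in> vecs m \<and> bform a v")
    case True
    then have "bform a (vadd a v)" "vadd a v \<in> vecs m"
      using a finite_if_vecs vadd_vecs by (auto simp: bform_vadd_right)
    with True show ?thesis unfolding transvection_def by simp
  next
    case False
    then show ?thesis unfolding transvection_def by auto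
  qed
qed

lemma transvection_vadd:
  assumes a: "a \<in> vecs m" and uv: "u \<in> vecs m" "v \<in> vecs m"
  shows "transvection m a (vadd u v) = vadd (transvection m a u) (transvection m a v)"
proof -
  have "bform a (vadd u v) \<longleftrightarrow> bform a u \<noteq> bform a v"
    using uv finite_if_vecs by (simp add: bform_vadd_right)
  moreover have "vadd u v \<in> vecs m" using uv by (rule vadd_vecs)
  moreover have "vadd a (vadd u v) = vadd (vadd a u) v" "vadd a (vadd u v) = vadd u (vadd a v)"
    "vadd u v = vadd (vadd a u) (vadd a v)"
    unfolding vadd_def by auto
  ultimately show ?thesis
    unfolding transvection_def using uv by auto
qed

lemma transvection_bform:
  assumes a: "a \<in> vecs m" and uv: "u \<in> vecs m" "v \<in> vecs m"
  shows "bform (transvection m a u) (transvection m a v) = bform u v"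
proof -
  have fin: "finite a" "finite u" "finite v" using a uv finite_if_vecs by auto
  have "bform u a = bform a u" "bform v a = bform a v" by (simp_all add: bform_commute)
  with fin show ?thesis
    unfolding transvection_def using uv by (simp add: bform_vadd_left bform_vadd_right)
qed

lemma transvection_Sp:
  assumes a: "a \<in> vecs m"
  shows "transvection m a \<in> Sp m"
proof -
  have "bij_betw (transvection m a) (vecs m) (vecs m)"
    using transvection_involution[OF a] transvection_vecs[OF a]
    by (intro bij_betw_byWitness[where f' = "transvection m a"]) (auto simp: fun_eq_iff)
  moreover have "symp m (transvection m a u) (transvection m a v) = symp m u v"
    if "u \<in> vecs m" "v \<in> vecs m" for u v
    using that transvection_bform[OF a] transvection_vecs[OF a] by (simp add: symp_eq_bform)
  ultimately show ?thesis
    unfolding Sp_def using transvection_vadd[OF a] by (simp add: transvection_def)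
qed

lemma qact_transvection:
  assumes Q: "Q \<in> qforms m" and Q': "Q' \<in> qforms m" and a: "a \<in> vecs m" "\<not> Q a"
    and add_bform: "\<forall>v\<in>vecs m. Q' v \<longleftrightarrow> Q v \<noteq> bform a v"
  shows "qact (transvection m a) Q = Q'" "qact (transvection m a) Q' = Q"
proof -
  have "Q (transvection m a v) = Q' v" for v
    using qform_vadd[OF Q a(1), of v] qform_outside[OF Q] qform_outside[OF Q'] a(2) add_bform
    unfolding transvection_def by auto
  then have "Q' = Q \<circ> transvection m a" by auto
  moreover note qact_involution[OF transvection_involution[OF a(1)]]
  ultimately show "qact (transvection m a) Q = Q'" "qact (transvection m a) Q' = Q"
    using transvection_involution[OF a(1)] by (simp_all add: comp_assoc)
qed

lemma Sp_fixing_forms_fixes: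
  assumes h: "h \<in> Sp m" "qact h Q = Q" "qact h Q' = Q'"
    and a: "a \<in> vecs m" and add_bform: "\<forall>v\<in>vecs m. Q' v \<longleftrightarrow> Q v \<noteq> bform a v"
  shows "h a = a"
proof -
  have ha: "h a \<in> vecs m" using Sp_vecs[OF h(1) a] .
  have "\<not> bform (vadd (h a) a) (h v)" if v: "v \<in> vecs m" for v
  proof -
    have hv: "h v \<in> vecs m" using Sp_vecs[OF h(1) v] .
    have "Q (h v) = Q v" "Q' (h v) = Q' v"
      using qact_fixed[OF bij_if_Sp[OF h(1)] h(2)] qact_fixed[OF bij_if_Sp[OF h(1)] h(3)] by blast+
    moreover have "Q' v \<longleftrightarrow> Q v \<noteq> bform a v" "Q' (h v) \<longleftrightarrow> Q (h v) \<noteq> bform a (h v)"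
      using add_bform v hv by blast+
    ultimately have "bform a (h v) = bform a v" by argo
    moreover have "bform (vadd (h a) a) (h v) \<longleftrightarrow> bform (h a) (h v) \<noteq> bform a (h v)"
      using finite_if_vecs[OF ha] finite_if_vecs[OF a] by (rule bform_vadd_left)
    ultimately show ?thesis using Sp_bform[OF h(1) a v] by simp
  qed
  then have "\<forall>x\<in>h ` vecs m. \<not> bform (vadd (h a) a) x" by blast
  then have "\<forall>x\<in>vecs m. \<not> bform (vadd (h a) a) x" by (simp only: Sp_image[OF h(1)])
  then have "vadd (h a) a = {}" using bform_nondegenerate vadd_vecs[OF ha a] by blast
  then show ?thesis by (simp add: vadd_eq_empty_iff)
qed

lemma transvection_commute:
  assumes h: "h \<in> Sp m" "h a = a" and a: "a \<in> vecs m"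
  shows "h \<circ> transvection m a = transvection m a \<circ> h"
proof
  fix v
  show "(h \<circ> transvection m a) v = (transvection m a \<circ> h) v"
  proof (cases "v \<in> vecs m")
    case True
    then have "bform a (h v) = bform a v" using Sp_bform[OF h(1) a] h(2) by simp
    then show ?thesis
      unfolding transvection_def using True Sp_vecs[OF h(1) True] Sp_vadd[OF h(1) a True] h(2) by simp
  next
    case False
    then show ?thesis unfolding transvection_def using Sp_outside[OF h(1)] by simp
  qed
qed

lemma transvection_central:
  assumes a: "a \<in> vecs m" and add_bform: "\<forall>v\<in>vecs m. Q' v \<longleftrightarrow> Q v \<noteq> bform a v"
  shows "\<forall>h\<in>Sp m. qact h Q = Q \<and> qact h Q' = Q' \<longrightarrow> h \<circ> transvection m a = transvection m a \<circ> h"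
proof (intro ballI impI)
  fix h assume h: "h \<in> Sp m" "qact h Q = Q \<and> qact h Q' = Q'"
  then have "h a = a" using Sp_fixing_forms_fixes[OF h(1) _ _ a add_bform] by blast
  then show "h \<circ> transvection m a = transvection m a \<circ> h"
    using transvection_commute[OF h(1) _ a] by blast
qed

section \<open>Setwise stabilisers and block-transitive extensions\<close>

lemma setwise_stabilizer_swap:
  assumes comp: "\<forall>g\<in>G. \<forall>h\<in>G. g \<circ> h \<in> G"
    and act_comp: "\<forall>g\<in>G. \<forall>h\<in>G. \<forall>z. act (g \<circ> h) z = act g (act h z)"
    and s: "s \<in> G" "s \<circ> s = id" "act s x = y" "act s y = x"
  shows "{g\<in>G. act g ` {x, y} = {x, y}}
    = {h\<in>G. act h x = x \<and> act h y = y} \<union> {s \<circ> h | h. h \<in> G \<and> act h x = x \<and> act h y = y}"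
proof (intro equalityI subsetI)
  fix g assume "g \<in> {g\<in>G. act g ` {x, y} = {x, y}}"
  then have g: "g \<in> G" and "{act g x, act g y} = {x, y}" by auto
  then consider "act g x = x" "act g y = y" | "act g x = y" "act g y = x"
    by (auto simp: doubleton_eq_iff)
  then show "g \<in> {h\<in>G. act h x = x \<and> act h y = y} \<union> {s \<circ> h | h. h \<in> G \<and> act h x = x \<and> act h y = y}"
  proof cases
    case 1
    then show ?thesis using g by blast
  next
    case 2
    then have "act (s \<circ> g) x = x" "act (s \<circ> g) y = y" using act_comp s g by simp_all
    moreover have "g = s \<circ> (s \<circ> g)" by (simp add: s(2) flip: comp_assoc)
    ultimately show ?thesis using comp s(1) g by blast
  qed
next
  fix g assume "g \<in> {h\<in>G. act h x = x \<and> act h y = y} \<union> {s \<circ> h | h. h \<in> G \<and> act h x = x \<and> act h y = y}"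
  then show "g \<in> {g\<in>G. act g ` {x, y} = {x, y}}"
    using comp act_comp s by auto
qed

lemma no_proper_2bbt_extension:
  assumes s: "s \<in> G" "s \<circ> s = id" and x: "x \<in> X" "xact s x = y" "x \<noteq> y"
    and central: "\<forall>h\<in>G. xact h x = x \<and> xact h y = y \<longrightarrow> h \<circ> s = s \<circ> h"
  shows "\<not> proper_2bbt_extension G xact X act \<Omega> \<pi>"
proof
  assume "proper_2bbt_extension G xact X act \<Omega> \<pi>"
  then have closed: "\<And>g w. g \<in> G \<Longrightarrow> w \<in> \<Omega> \<Longrightarrow> act g w \<in> \<Omega>"
    and act_id: "\<And>w. w \<in> \<Omega> \<Longrightarrow> act id w = w"
    and act_comp: "\<And>g h w. g \<in> G \<Longrightarrow> h \<in> G \<Longrightarrow> w \<in> \<Omega> \<Longrightarrow> act (g \<circ> h) w = act g (act h w)"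
    and equivariant: "\<And>g w. g \<in> G \<Longrightarrow> w \<in> \<Omega> \<Longrightarrow> \<pi> (act g w) = xact g (\<pi> w)"
    and blocks: "\<forall>x\<in>X. \<exists>a\<in>\<Omega>. \<exists>b\<in>\<Omega>. a \<noteq> b \<and> \<pi> a = x \<and> \<pi> b = x"
    and transitive: "\<And>a b c d. a \<in> \<Omega> \<Longrightarrow> b \<in> \<Omega> \<Longrightarrow> c \<in> \<Omega> \<Longrightarrow> d \<in> \<Omega> \<Longrightarrow>
       \<pi> a \<noteq> \<pi> b \<Longrightarrow> \<pi> c \<noteq> \<pi> d \<Longrightarrow> \<exists>g\<in>G. act g a = c \<and> act g b = d"
    unfolding proper_2bbt_extension_def by blast+
  obtain \<alpha> \<beta> where \<alpha>\<beta>: "\<alpha> \<in> \<Omega>" "\<beta> \<in> \<Omega>" "\<alpha> \<noteq> \<beta>" "\<pi> \<alpha> = x" "\<pi> \<beta> = x"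
    using blocks x(1) by blast
  have s_invol: "act s (act s w) = w" if "w \<in> \<Omega>" for w
    using act_comp[OF s(1) s(1) that] s(2) act_id[OF that] by simp
  have s\<alpha>\<beta>: "act s \<alpha> \<in> \<Omega>" "act s \<beta> \<in> \<Omega>" "\<pi> (act s \<alpha>) = y" "\<pi> (act s \<beta>) = y"
    using closed[OF s(1)] equivariant[OF s(1)] \<alpha>\<beta> x(2) by auto
  then obtain g where g: "g \<in> G" "act g \<alpha> = \<alpha>" "act g (act s \<alpha>) = act s \<beta>"
    using transitive[OF \<alpha>\<beta>(1) s\<alpha>\<beta>(1) \<alpha>\<beta>(1) s\<alpha>\<beta>(2)] \<alpha>\<beta>(4) x(3) by auto
  have "xact g x = x" "xact g y = y"
    using equivariant[OF g(1) \<alpha>\<beta>(1)] equivariant[OF g(1) s\<alpha>\<beta>(1)] g(2,3) \<alpha>\<beta>(4) s\<alpha>\<beta>(3,4) by simp_all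
  then have "g \<circ> s = s \<circ> g" using central g(1) by blast
  then have "act s \<beta> = act s \<alpha>"
    using g(2,3) act_comp[OF g(1) s(1) \<alpha>\<beta>(1)] act_comp[OF s(1) g(1) \<alpha>\<beta>(1)] by simp
  then show False using s_invol \<alpha>\<beta>(1-3) by metis
qed

theorem lemma3p7:
  fixes m :: nat and eps :: bool and \<omega> \<omega>' :: "nat set \<Rightarrow> bool"
  assumes "m \<ge> 3"
    and "\<omega> \<in> qforms_type m eps" and "\<omega>' \<in> qforms_type m eps" and "\<omega> \<noteq> \<omega>'"
  shows "(\<exists>s\<in>Sp m. s \<circ> s = id \<and> qact s \<omega> = \<omega>' \<and> qact s \<omega>' = \<omega>
            \<and> (\<forall>h\<in>Sp m. qact h \<omega> = \<omega> \<and> qact h \<omega>' = \<omega>' \<longrightarrow> h \<circ> s = s \<circ> h)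
            \<and> {g\<in>Sp m. qact g ` {\<omega>, \<omega>'} = {\<omega>, \<omega>'}}
              = {h\<in>Sp m. qact h \<omega> = \<omega> \<and> qact h \<omega>' = \<omega>'}
                \<union> {s \<circ> h | h. h \<in> Sp m \<and> qact h \<omega> = \<omega> \<and> qact h \<omega>' = \<omega>'})
         \<and> \<not> (\<exists>(act :: (nat set \<Rightarrow> nat set) \<Rightarrow> 'b \<Rightarrow> 'b) \<Omega> \<pi>.
                proper_2bbt_extension (Sp m) qact (qforms_type m eps) act \<Omega> \<pi>)"
proof -
  from assms(2,3) have \<omega>: "\<omega> \<in> qforms m" "\<omega>' \<in> qforms m" "plus_type m \<omega> = plus_type m \<omega>'"
    unfolding qforms_type_def by simp_all
  then obtain a where a: "a \<in> vecs m" and add_bform: "\<forall>v\<in>vecs m. \<omega>' v \<longleftrightarrow> \<omega> v \<noteq> bform a v"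
    using qforms_differ_by_bform by blast
  have "\<not> \<omega> a" using same_type_add_bform_singular[OF \<omega>(1,2) a add_bform \<omega>(3)] .
  define s where "s = transvection m a"
  have s: "s \<in> Sp m" "s \<circ> s = id" "qact s \<omega> = \<omega>'" "qact s \<omega>' = \<omega>"
    unfolding s_def using transvection_Sp[OF a] transvection_involution[OF a]
      qact_transvection[OF \<omega>(1,2) a \<open>\<not> \<omega> a\<close> add_bform] by simp_all
  have central: "\<forall>h\<in>Sp m. qact h \<omega> = \<omega> \<and> qact h \<omega>' = \<omega>' \<longrightarrow> h \<circ> s = s \<circ> h"
    unfolding s_def using transvection_central[OF a add_bform] .
  have comp: "\<forall>g\<in>Sp m. \<forall>h\<in>Sp m. g \<circ> h \<in> Sp m" using Sp_comp by blast
  note stabilizer = setwise_stabilizer_swap[where act = qact, OF comp qact_comp_Sp s]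
  note no_extension = no_proper_2bbt_extension[where xact = qact, OF s(1,2) assms(2) s(3) assms(4) central]
  show ?thesis
    by (intro conjI bexI[where x = s] s central stabilizer) (use no_extension in blast)
qed

end
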